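(* Let $n\ge0$ and let $a_{n,0},\dots,a_{n,n}$ be real numbers with $a_{n,k}=a_{n,n-k}$ for all $0\le k\le n$. Then the associated polynomial $P_n$ satisfies $P_n(-z)=(-1)^nP_n(z)$, i.e. $P_n$ has the same parity as $n$.
   Context: $\imath=\sqrt{-1}$. $\mathcal{A}$ denotes the quotient of the free associative $\mathbb{C}$-algebra on two noncommuting generators $p,q$ by the two-sided ideal generated by $qp-pq-\imath$, and $z=\tfrac12(qp+pq)\in\mathcal A$. For $n\ge0$ and complex numbers $a_{n,0},\dots,a_{n,n}$, there is a unique polynomial $P_n\in\mathbb{C}[X]$ of degree at most $n$ with $\sum_{k=0}^n a_{n,k}q^kp^nq^{n-k}=P_n(z)$ in $\mathcal A$; it is called the polynomial associated to $\{a_{n,k}\}$. *)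

theory Defs
  imports Complex_Main "HOL-Library.Function_Algebras" "HOL-Computational_Algebra.Polynomial"
begin

text \<open>The free associative complex algebra on two generators p, q is modelled as
  finitely supported functions from words (lists of generators) to complex coefficients;
  addition and scalar multiplication are pointwise, multiplication is concatenation
  convolution. The Weyl algebra A is its quotient by the two-sided ideal generated by
  qp - pq - i; equality in A is expressed as membership of the difference in that ideal.\<close>

datatype gen = Gp | Gq

type_synonym fa = "gen list \<Rightarrow> complex"

definition fa_mult :: "fa \<Rightarrow> fa \<Rightarrow> fa" where
  "fa_mult f g = (\<lambda>w. \<Sum>i\<le>length w. f (take i w) * g (drop i w))"

definition fa_word :: "gen list \<Rightarrow> fa" where
  "fa_word u = (\<lambda>v. if v = u then 1 else 0)"

definition fa_scale :: "complex \<Rightarrow> fa \<Rightarrow> fa" where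
  "fa_scale c f = (\<lambda>w. c * f w)"

definition fa_one :: fa where
  "fa_one = fa_word []"

primrec fa_pow :: "fa \<Rightarrow> nat \<Rightarrow> fa" where
  "fa_pow f 0 = fa_one"
| "fa_pow f (Suc m) = fa_mult f (fa_pow f m)"

definition fa_poly :: "complex poly \<Rightarrow> fa \<Rightarrow> fa" where
  "fa_poly P x = (\<Sum>j\<le>degree P. fa_scale (coeff P j) (fa_pow x j))"

definition weyl_rel :: fa where
  "weyl_rel = fa_word [Gq, Gp] - fa_word [Gp, Gq] - fa_scale \<i> fa_one"

inductive_set weyl_ideal :: "fa set" where
  gen: "weyl_rel \<in> weyl_ideal"
| zero: "0 \<in> weyl_ideal"
| add: "x \<in> weyl_ideal \<Longrightarrow> y \<in> weyl_ideal \<Longrightarrow> x + y \<in> weyl_ideal"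
| scale: "x \<in> weyl_ideal \<Longrightarrow> fa_scale c x \<in> weyl_ideal"
| mult_left: "x \<in> weyl_ideal \<Longrightarrow> fa_mult (fa_word u) x \<in> weyl_ideal"
| mult_right: "x \<in> weyl_ideal \<Longrightarrow> fa_mult x (fa_word u) \<in> weyl_ideal"

definition weyl_eq :: "fa \<Rightarrow> fa \<Rightarrow> bool" where
  "weyl_eq x y \<longleftrightarrow> x - y \<in> weyl_ideal"

definition weyl_z :: fa where
  "weyl_z = fa_scale (1/2) (fa_word [Gq, Gp] + fa_word [Gp, Gq])"

definition weyl_sum :: "nat \<Rightarrow> (nat \<Rightarrow> complex) \<Rightarrow> fa" where
  "weyl_sum n a = (\<Sum>k\<le>n. fa_scale (a k)
      (fa_word (replicate k Gq @ replicate n Gp @ replicate (n - k) Gq)))"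

definition is_assoc_poly :: "nat \<Rightarrow> (nat \<Rightarrow> complex) \<Rightarrow> complex poly \<Rightarrow> bool" where
  "is_assoc_poly n a P \<longleftrightarrow> degree P \<le> n \<and> weyl_eq (weyl_sum n a) (fa_poly P weyl_z)"

end

theory Submission
  imports Defs
begin

text \<open>Let the generators act on \<open>\<complex>[X]\<close> by the Schroedinger representation: \<open>q\<close> as multiplication
  by \<open>X\<close> and \<open>p\<close> as \<open>-\<i> d/dX\<close>. Then \<open>qp - pq\<close> acts as \<open>\<i>\<close>, so the Weyl ideal acts as zero
  and both sides of the defining identity of \<open>P\<close> act alike. Both act diagonally on monomials:
  \<open>z\<close> multiplies \<open>X\<^sup>m\<close> by \<open>-\<i>(m + 1/2)\<close>, and \<open>q\<^sup>k p\<^sup>n q\<^sup>n\<^sup>-\<^sup>k\<close> multiplies it by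
  \<open>(-\<i>)\<^sup>n (m - k + 1)\<^sub>n\<close> (a Pochhammer symbol). Hence the polynomials \<open>P(-\<i>(t + 1/2))\<close> and
  \<open>(-\<i>)\<^sup>n \<Sum>\<^sub>k a\<^sub>k (t - k + 1)\<^sub>n\<close> in \<open>t\<close> agree on all naturals and are equal. The substitution
  \<open>t \<mapsto> -1 - t\<close> turns the argument of \<open>P\<close> into its negative, while the reflection formula
  for Pochhammer symbols and \<open>a\<^sub>k = a\<^sub>n\<^sub>-\<^sub>k\<close> show that it multiplies the right-hand side by \<open>(-1)\<^sup>n\<close>.\<close>

lemma smult_sum_right: "smult c (\<Sum>i\<in>S. f i) = (\<Sum>i\<in>S. smult c (f i))"
  by (induct S rule: infinite_finite_induct) (simp_all add: smult_add_right)

lemma poly_pochhammer: "poly (pochhammer p n) x = pochhammer (poly p x) n"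
  by (induct n) (simp_all add: pochhammer_Suc)

lemma poly_eqI_of_nat:
  fixes p q :: "'a::{idom, ring_char_0} poly"
  assumes "\<And>m. poly p (of_nat m) = poly q (of_nat m)"
  shows "p = q"
proof (rule ccontr)
  assume "p \<noteq> q"
  then have "finite {x. poly (p - q) x = 0}"
    by (intro poly_roots_finite) simp
  moreover have "range (of_nat :: nat \<Rightarrow> 'a) \<subseteq> {x. poly (p - q) x = 0}"
    using assms by auto
  moreover have "infinite (range (of_nat :: nat \<Rightarrow> 'a))"
    by (intro range_inj_infinite inj_of_nat)
  ultimately show False
    using finite_subset by blast
qed

fun gen_op :: "gen \<Rightarrow> complex poly \<Rightarrow> complex poly" where
  "gen_op Gq v = pCons 0 v"
| "gen_op Gp v = smult (- \<i>) (pderiv v)"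

definition word_op :: "gen list \<Rightarrow> complex poly \<Rightarrow> complex poly" where
  "word_op w = foldr gen_op w"

lemma word_op_simps [simp]:
  "word_op [] v = v"
  "word_op (g # w) v = gen_op g (word_op w v)"
  "word_op (u @ w) v = word_op u (word_op w v)"
  by (simp_all add: word_op_def)

lemma gen_op_add: "gen_op g (v + v') = gen_op g v + gen_op g v'"
  by (cases g) (simp_all add: pderiv_add smult_add_right)

lemma gen_op_smult: "gen_op g (smult c v) = smult c (gen_op g v)"
  by (cases g) (simp_all add: pderiv_smult mult.commute)

lemma word_op_add: "word_op w (v + v') = word_op w v + word_op w v'"
  by (induct w) (simp_all add: gen_op_add)

lemma word_op_smult: "word_op w (smult c v) = smult c (word_op w v)"
  by (induct w) (simp_all add: gen_op_smult)

lemma word_op_0 [simp]: "word_op w 0 = 0"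
  using word_op_smult[of w 0 0] by simp

lemma word_op_sum: "word_op w (\<Sum>i\<in>S. f i) = (\<Sum>i\<in>S. word_op w (f i))"
  by (induct S rule: infinite_finite_induct) (simp_all add: word_op_add)

definition fa_support :: "fa \<Rightarrow> gen list set" where
  "fa_support f = {w. f w \<noteq> 0}"

definition fa_op :: "fa \<Rightarrow> complex poly \<Rightarrow> complex poly" where
  "fa_op f v = (\<Sum>w\<in>fa_support f. smult (f w) (word_op w v))"

lemma fa_op_eq_sum_superset:
  assumes "finite S" "fa_support f \<subseteq> S"
  shows "fa_op f v = (\<Sum>w\<in>S. smult (f w) (word_op w v))"
  unfolding fa_op_def
  by (rule sum.mono_neutral_left) (use assms in \<open>auto simp: fa_support_def\<close>)

lemma fa_support_word [simp]: "fa_support (fa_word u) = {u}"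
  by (auto simp: fa_support_def fa_word_def)

lemma fa_op_word [simp]: "fa_op (fa_word u) v = word_op u v"
  unfolding fa_op_def fa_support_word by (simp add: fa_word_def)

lemma fa_support_zero [simp]: "fa_support 0 = {}"
  by (simp add: fa_support_def)

lemma fa_op_zero [simp]: "fa_op 0 v = 0"
  by (simp add: fa_op_def)

lemma fa_support_add: "fa_support (f + g) \<subseteq> fa_support f \<union> fa_support g"
  by (auto simp: fa_support_def)

lemma fa_support_diff: "fa_support (f - g) \<subseteq> fa_support f \<union> fa_support g"
  by (auto simp: fa_support_def)

lemma fa_support_scale: "fa_support (fa_scale c f) \<subseteq> fa_support f"
  by (auto simp: fa_support_def fa_scale_def)

lemma finite_fa_support_add [simp]:
  "finite (fa_support f) \<Longrightarrow> finite (fa_support g) \<Longrightarrow> finite (fa_support (f + g))"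
  using fa_support_add finite_subset by blast

lemma finite_fa_support_diff [simp]:
  "finite (fa_support f) \<Longrightarrow> finite (fa_support g) \<Longrightarrow> finite (fa_support (f - g))"
  using fa_support_diff finite_subset by blast

lemma finite_fa_support_scale [simp]:
  "finite (fa_support f) \<Longrightarrow> finite (fa_support (fa_scale c f))"
  using fa_support_scale finite_subset by blast

lemma fa_op_add:
  assumes "finite (fa_support f)" "finite (fa_support g)"
  shows "fa_op (f + g) v = fa_op f v + fa_op g v"
proof -
  let ?S = "fa_support f \<union> fa_support g"
  have "fa_op (f + g) v = (\<Sum>w\<in>?S. smult ((f + g) w) (word_op w v))"
    using assms fa_support_add by (intro fa_op_eq_sum_superset) auto
  also have "\<dots> = (\<Sum>w\<in>?S. smult (f w) (word_op w v)) + (\<Sum>w\<in>?S. smult (g w) (word_op w v))"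
    by (simp add: smult_add_left sum.distrib)
  finally show ?thesis
    using assms by (simp add: fa_op_eq_sum_superset[of ?S])
qed

lemma fa_op_diff:
  assumes "finite (fa_support f)" "finite (fa_support g)"
  shows "fa_op (f - g) v = fa_op f v - fa_op g v"
proof -
  let ?S = "fa_support f \<union> fa_support g"
  have "fa_op (f - g) v = (\<Sum>w\<in>?S. smult ((f - g) w) (word_op w v))"
    using assms fa_support_diff by (intro fa_op_eq_sum_superset) auto
  also have "\<dots> = (\<Sum>w\<in>?S. smult (f w) (word_op w v)) - (\<Sum>w\<in>?S. smult (g w) (word_op w v))"
    by (simp add: smult_diff_left sum_subtractf)
  finally show ?thesis
    using assms by (simp add: fa_op_eq_sum_superset[of ?S])
qed

lemma fa_op_scale:
  assumes "finite (fa_support f)"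
  shows "fa_op (fa_scale c f) v = smult c (fa_op f v)"
proof -
  have "fa_op (fa_scale c f) v = (\<Sum>w\<in>fa_support f. smult (fa_scale c f w) (word_op w v))"
    using assms fa_support_scale by (intro fa_op_eq_sum_superset) auto
  then show ?thesis
    by (simp add: fa_op_def fa_scale_def smult_sum_right)
qed

lemma finite_fa_support_sum [simp]:
  "finite S \<Longrightarrow> (\<And>i. i \<in> S \<Longrightarrow> finite (fa_support (f i))) \<Longrightarrow>
    finite (fa_support (\<Sum>i\<in>S. f i))"
  by (induct S rule: finite_induct) simp_all

lemma fa_op_sum:
  assumes "finite S" "\<And>i. i \<in> S \<Longrightarrow> finite (fa_support (f i))"
  shows "fa_op (\<Sum>i\<in>S. f i) v = (\<Sum>i\<in>S. fa_op (f i) v)"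
  using assms by (induct S rule: finite_induct) (simp_all add: fa_op_add)

lemma fa_mult_word_left:
  "fa_mult (fa_word u) f w = (if take (length u) w = u then f (drop (length u) w) else 0)"
proof -
  have "fa_mult (fa_word u) f w =
      (\<Sum>i\<le>length w. if i = length u then (if take i w = u then f (drop i w) else 0) else 0)"
    unfolding fa_mult_def fa_word_def by (rule sum.cong) auto
  then show ?thesis
    by (auto simp: sum.delta dest: arg_cong[where f = length])
qed

lemma fa_mult_word_right:
  "fa_mult f (fa_word u) w =
    (if drop (length w - length u) w = u then f (take (length w - length u) w) else 0)"
proof -
  have "fa_mult f (fa_word u) w =
      (\<Sum>i\<le>length w. if i = length w - length u
         then (if drop i w = u then f (take i w) else 0) else 0)"
    unfolding fa_mult_def fa_word_def by (rule sum.cong) (auto dest: arg_cong[where f = length])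
  then show ?thesis
    by (simp add: sum.delta)
qed

lemma fa_support_mult_word_left: "fa_support (fa_mult (fa_word u) f) \<subseteq> (\<lambda>w. u @ w) ` fa_support f"
proof
  fix w assume "w \<in> fa_support (fa_mult (fa_word u) f)"
  then have "take (length u) w = u" "f (drop (length u) w) \<noteq> 0"
    by (auto simp: fa_support_def fa_mult_word_left split: if_splits)
  moreover have "w = take (length u) w @ drop (length u) w"
    by simp
  ultimately show "w \<in> (\<lambda>w. u @ w) ` fa_support f"
    by (intro image_eqI[of w _ "drop (length u) w"]) (simp_all add: fa_support_def)
qed

lemma fa_support_mult_word_right: "fa_support (fa_mult f (fa_word u)) \<subseteq> (\<lambda>w. w @ u) ` fa_support f"
proof
  fix w assume "w \<in> fa_support (fa_mult f (fa_word u))"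
  then have "drop (length w - length u) w = u" "f (take (length w - length u) w) \<noteq> 0"
    by (auto simp: fa_support_def fa_mult_word_right split: if_splits)
  moreover have "w = take (length w - length u) w @ drop (length w - length u) w"
    by simp
  ultimately show "w \<in> (\<lambda>w. w @ u) ` fa_support f"
    by (intro image_eqI[of w _ "take (length w - length u) w"]) (simp_all add: fa_support_def)
qed

lemma finite_fa_support_mult_word [simp]:
  assumes "finite (fa_support f)"
  shows "finite (fa_support (fa_mult (fa_word u) f))" "finite (fa_support (fa_mult f (fa_word u)))"
  using finite_subset[OF fa_support_mult_word_left] finite_subset[OF fa_support_mult_word_right] assms
  by simp_all

lemma fa_op_mult_word_left:
  assumes "finite (fa_support f)"
  shows "fa_op (fa_mult (fa_word u) f) v = word_op u (fa_op f v)"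
proof -
  have "fa_op (fa_mult (fa_word u) f) v =
      (\<Sum>w\<in>(\<lambda>w. u @ w) ` fa_support f. smult (fa_mult (fa_word u) f w) (word_op w v))"
    using assms fa_support_mult_word_left by (intro fa_op_eq_sum_superset) auto
  also have "\<dots> = (\<Sum>w\<in>fa_support f. smult (fa_mult (fa_word u) f (u @ w)) (word_op (u @ w) v))"
    by (subst sum.reindex) (auto simp: inj_on_def)
  also have "\<dots> = (\<Sum>w\<in>fa_support f. word_op u (smult (f w) (word_op w v)))"
    by (simp add: fa_mult_word_left word_op_smult)
  finally show ?thesis
    by (simp add: fa_op_def word_op_sum)
qed

lemma fa_op_mult_word_right:
  assumes "finite (fa_support f)"
  shows "fa_op (fa_mult f (fa_word u)) v = fa_op f (word_op u v)"
proof -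
  have "fa_op (fa_mult f (fa_word u)) v =
      (\<Sum>w\<in>(\<lambda>w. w @ u) ` fa_support f. smult (fa_mult f (fa_word u) w) (word_op w v))"
    using assms fa_support_mult_word_right by (intro fa_op_eq_sum_superset) auto
  also have "\<dots> = (\<Sum>w\<in>fa_support f. smult (fa_mult f (fa_word u) (w @ u)) (word_op (w @ u) v))"
    by (subst sum.reindex) (auto simp: inj_on_def)
  also have "\<dots> = (\<Sum>w\<in>fa_support f. smult (f w) (word_op w (word_op u v)))"
    by (simp add: fa_mult_word_right)
  finally show ?thesis
    by (simp add: fa_op_def)
qed

lemma fa_op_weyl_rel: "fa_op weyl_rel v = 0"
proof -
  have "fa_op weyl_rel v = word_op [Gq, Gp] v - word_op [Gp, Gq] v - smult \<i> v"
    by (simp add: weyl_rel_def fa_one_def fa_op_diff fa_op_scale)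
  also have "\<dots> = 0"
    by (simp add: pderiv_pCons smult_add_right)
  finally show ?thesis .
qed

lemma weyl_ideal_annihilates:
  "x \<in> weyl_ideal \<Longrightarrow> finite (fa_support x) \<and> (\<forall>v. fa_op x v = 0)"
proof (induct rule: weyl_ideal.induct)
  case gen
  have "finite (fa_support weyl_rel)"
    unfolding weyl_rel_def fa_one_def
    by (intro finite_fa_support_diff finite_fa_support_scale) simp_all
  with fa_op_weyl_rel show ?case
    by blast
next
  case zero
  \<comment> \<open>the rule induction presents \<open>0\<close> and \<open>x + y\<close> pointwise, as \<open>\<lambda>a. 0\<close> and \<open>\<lambda>a. x a + y a\<close>\<close>
  show ?case
    by (simp add: fa_support_def fa_op_def)
next
  case (add x y)
  then show ?case
    using fa_op_add[of x y] finite_fa_support_add[of x y] by (simp add: plus_fun_def)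
qed (simp_all add: fa_op_scale fa_op_mult_word_left fa_op_mult_word_right)

lemma weyl_eq_fa_op:
  assumes "weyl_eq x y" "finite (fa_support y)"
  shows "fa_op x v = fa_op y v"
proof -
  have "finite (fa_support (x - y))" "fa_op (x - y) v = 0"
    using assms(1) weyl_ideal_annihilates by (auto simp: weyl_eq_def)
  moreover have "x = (x - y) + y"
    by simp
  ultimately show ?thesis
    using assms(2) fa_op_add[of "x - y" y v] by simp
qed

lemma fa_mult_add_left: "fa_mult (f + g) h = fa_mult f h + fa_mult g h"
  by (rule ext) (simp add: fa_mult_def ring_distribs sum.distrib)

lemma fa_mult_scale_left: "fa_mult (fa_scale c f) h = fa_scale c (fa_mult f h)"
  by (rule ext) (simp add: fa_mult_def fa_scale_def sum_distrib_left mult.assoc)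

lemma finite_fa_support_weyl_z [simp]: "finite (fa_support weyl_z)"
  by (simp add: weyl_z_def)

lemma fa_op_weyl_z: "fa_op weyl_z v = smult (1/2) (word_op [Gq, Gp] v + word_op [Gp, Gq] v)"
  by (simp add: weyl_z_def fa_op_scale fa_op_add)

lemma finite_fa_support_mult_weyl_z [simp]:
  "finite (fa_support f) \<Longrightarrow> finite (fa_support (fa_mult weyl_z f))"
  by (simp add: weyl_z_def fa_mult_scale_left fa_mult_add_left)

lemma fa_op_mult_weyl_z:
  assumes "finite (fa_support f)"
  shows "fa_op (fa_mult weyl_z f) v = fa_op weyl_z (fa_op f v)"
  using assms
  by (simp add: weyl_z_def fa_mult_scale_left fa_mult_add_left fa_op_scale fa_op_add
      fa_op_mult_word_left)

lemma fa_op_weyl_z_monom: "fa_op weyl_z (monom c m) = monom (- \<i> * (of_nat m + 1/2) * c) m"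
proof -
  have "word_op [Gq, Gp] (monom c m) = monom (- \<i> * of_nat m * c) m"
    by (cases m) (simp_all add: pderiv_monom smult_monom monom_Suc[symmetric] mult.commute)
  moreover have "word_op [Gp, Gq] (monom c m) = monom (- \<i> * of_nat (Suc m) * c) m"
    by (simp add: pderiv_monom smult_monom monom_Suc[symmetric] mult.commute)
  ultimately show ?thesis
    by (simp add: fa_op_weyl_z smult_monom add_monom algebra_simps)
qed

lemma finite_fa_support_pow_weyl_z [simp]: "finite (fa_support (fa_pow weyl_z j))"
  by (induct j) (simp_all add: fa_one_def)

lemma fa_op_pow_weyl_z_monom:
  "fa_op (fa_pow weyl_z j) (monom c m) = monom ((- \<i> * (of_nat m + 1/2)) ^ j * c) m"
  by (induct j) (simp_all add: fa_one_def fa_op_mult_weyl_z fa_op_weyl_z_monom mult.assoc)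

lemma fa_op_poly_weyl_z_monom:
  "fa_op (fa_poly P weyl_z) (monom c m) = monom (poly P (- \<i> * (of_nat m + 1/2)) * c) m"
  by (simp add: fa_poly_def fa_op_sum fa_op_scale fa_op_pow_weyl_z_monom smult_monom
      poly_altdef sum_distrib_right monom_sum mult.assoc)

lemma finite_fa_support_poly_weyl_z: "finite (fa_support (fa_poly P weyl_z))"
  by (simp add: fa_poly_def)

lemma word_op_replicate_q_monom: "word_op (replicate j Gq) (monom c N) = monom c (N + j)"
  by (induct j) (simp_all add: monom_Suc)

lemma word_op_replicate_p_monom:
  "word_op (replicate j Gp) (monom c N) =
    monom ((- \<i>) ^ j * pochhammer (of_nat N - of_nat j + 1) j * c) (N - j)"
proof (induct j)
  case (Suc j)
  have "pochhammer (of_nat N - of_nat (Suc j) + 1) (Suc j) =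
      of_nat (N - j) * pochhammer (of_nat N - of_nat j + 1 :: complex) j"
  proof (cases "j < N")
    case True
    then show ?thesis
      by (simp add: pochhammer_rec of_nat_diff)
  next
    case False
    then have "of_nat N - of_nat (Suc j) + 1 = - (of_nat (j - N) :: complex)"
      by (simp add: of_nat_diff)
    then have "pochhammer (of_nat N - of_nat (Suc j) + 1 :: complex) (Suc j) = 0"
      unfolding pochhammer_eq_0_iff by (intro exI[of _ "j - N"]) auto
    with False show ?thesis
      by simp
  qed
  with Suc show ?case
    by (simp add: pderiv_monom smult_monom)
qed simp

definition weyl_sum_eigenpoly :: "nat \<Rightarrow> (nat \<Rightarrow> 'a::comm_ring_1) \<Rightarrow> 'a poly" where
  "weyl_sum_eigenpoly n a = (\<Sum>k\<le>n. smult (a k) (pochhammer [:1 - of_nat k, 1:] n))"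

lemma poly_weyl_sum_eigenpoly:
  "poly (weyl_sum_eigenpoly n a) t = (\<Sum>k\<le>n. a k * pochhammer (t - of_nat k + 1) n)"
  by (simp add: weyl_sum_eigenpoly_def poly_sum poly_pochhammer algebra_simps)

lemma word_op_weyl_sum_word_monom:
  assumes "k \<le> n"
  shows "word_op (replicate k Gq @ replicate n Gp @ replicate (n - k) Gq) (monom c m) =
    monom ((- \<i>) ^ n * pochhammer (of_nat m - of_nat k + 1) n * c) m"
proof (cases "k \<le> m")
  case True
  with assms show ?thesis
    by (simp add: word_op_replicate_q_monom word_op_replicate_p_monom of_nat_diff)
next
  case False
  then have "of_nat m - of_nat k + 1 = - (of_nat (k - Suc m) :: complex)"
    by (simp add: of_nat_diff)
  then have "pochhammer (of_nat m - of_nat k + 1 :: complex) n = 0"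
    using assms False unfolding pochhammer_eq_0_iff by (intro exI[of _ "k - Suc m"]) auto
  with assms show ?thesis
    by (simp add: word_op_replicate_q_monom word_op_replicate_p_monom of_nat_diff)
qed

lemma fa_op_weyl_sum_monom:
  "fa_op (weyl_sum n a) (monom c m) =
    monom ((- \<i>) ^ n * poly (weyl_sum_eigenpoly n a) (of_nat m) * c) m"
proof -
  have "fa_op (weyl_sum n a) (monom c m) =
      (\<Sum>k\<le>n. monom (a k * ((- \<i>) ^ n * pochhammer (of_nat m - of_nat k + 1) n * c)) m)"
    unfolding weyl_sum_def
    by (simp add: fa_op_sum fa_op_scale smult_monom word_op_weyl_sum_word_monom del: word_op_simps)
  then show ?thesis
    by (simp add: poly_weyl_sum_eigenpoly sum_distrib_left sum_distrib_right monom_sum algebra_simps)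
qed

lemma weyl_sum_eigenpoly_reflect:
  fixes a :: "nat \<Rightarrow> 'a::comm_ring_1"
  assumes "\<And>k. k \<le> n \<Longrightarrow> a k = a (n - k)"
  shows "poly (weyl_sum_eigenpoly n a) (- t - 1) = (-1) ^ n * poly (weyl_sum_eigenpoly n a) t"
proof -
  have reflect: "pochhammer (- t - 1 - of_nat k + 1) n =
      (-1) ^ n * pochhammer (t - of_nat (n - k) + 1) n" if "k \<le> n" for k
    using that pochhammer_minus[of "t + of_nat k" n] by (simp add: of_nat_diff algebra_simps)
  have "poly (weyl_sum_eigenpoly n a) (- t - 1) =
      (\<Sum>k\<le>n. (-1) ^ n * (a (n - k) * pochhammer (t - of_nat (n - k) + 1) n))"
    unfolding poly_weyl_sum_eigenpoly
    by (rule sum.cong) (simp, metis assms atMost_iff reflect mult.left_commute)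
  also have "\<dots> = (-1) ^ n * (\<Sum>k\<le>n. a (n - k) * pochhammer (t - of_nat (n - k) + 1) n)"
    by (simp add: sum_distrib_left)
  also have "(\<Sum>k\<le>n. a (n - k) * pochhammer (t - of_nat (n - k) + 1) n) =
      poly (weyl_sum_eigenpoly n a) t"
    unfolding poly_weyl_sum_eigenpoly
    by (rule sum.reindex_bij_witness[where i = "\<lambda>k. n - k" and j = "\<lambda>k. n - k"]) auto
  finally show ?thesis .
qed

lemma assoc_poly_eigenpoly:
  assumes "is_assoc_poly n a P"
  shows "pcompose P [:- \<i> / 2, - \<i>:] = smult ((- \<i>) ^ n) (weyl_sum_eigenpoly n a)"
proof (rule poly_eqI_of_nat)
  fix m
  have "fa_op (weyl_sum n a) (monom 1 m) = fa_op (fa_poly P weyl_z) (monom 1 m)"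
    using assms finite_fa_support_poly_weyl_z by (intro weyl_eq_fa_op) (auto simp: is_assoc_poly_def)
  then show "poly (pcompose P [:- \<i> / 2, - \<i>:]) (of_nat m) =
      poly (smult ((- \<i>) ^ n) (weyl_sum_eigenpoly n a)) (of_nat m)"
    by (simp add: fa_op_weyl_sum_monom fa_op_poly_weyl_z_monom poly_pcompose algebra_simps)
qed

theorem proposition4p4:
  fixes n :: nat and a :: "nat \<Rightarrow> real" and P :: "complex poly"
  assumes "\<And>k. k \<le> n \<Longrightarrow> a k = a (n - k)"
    and "is_assoc_poly n (\<lambda>k. complex_of_real (a k)) P"
  shows "\<forall>x. poly P (- x) = (-1) ^ n * poly P x"
proof
  fix x :: complex
  let ?E = "weyl_sum_eigenpoly n (\<lambda>k. complex_of_real (a k))"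
  let ?t = "\<i> * x - 1/2"
  have reflect: "poly ?E (- ?t - 1) = (-1) ^ n * poly ?E ?t"
    by (intro weyl_sum_eigenpoly_reflect arg_cong[where f = complex_of_real] assms(1))
  have eval: "poly P (- \<i> * (t + 1/2)) = (- \<i>) ^ n * poly ?E t" for t
    using arg_cong[OF assoc_poly_eigenpoly[OF assms(2)], of "\<lambda>p. poly p t"]
    by (simp add: poly_pcompose algebra_simps)
  have "poly P (- x) = (- \<i>) ^ n * poly ?E (- ?t - 1)"
    using eval[of "- ?t - 1"] by (simp add: algebra_simps)
  also have "\<dots> = (-1) ^ n * ((- \<i>) ^ n * poly ?E ?t)"
    unfolding reflect by (rule mult.left_commute)
  also have "\<dots> = (-1) ^ n * poly P x"
    using eval[of ?t] by (simp add: algebra_simps)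
  finally show "poly P (- x) = (-1) ^ n * poly P x" .
qed

end
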